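(* Let $n \in \mathbb{Z}_{>0}$ and $M \in \mathbb{Z}_{\geq 0}$. If $n=1$, then $\mathrm{pstairPP}(n,M)=\mathrm{QTCPP}(n,M)$. If $n\ge 2$, define for $\pi\in\mathrm{pstairPP}(n,M)$ the array $f(\pi)$ on the staircase cells by $f(\pi)_{i,j}=\frac{\pi_{i,j}+M}{2}$ if $i+j<n+1$, and $f(\pi)_{i,j}=\pi_{i,j}+\frac{M-m_{i,j}}{2}$ if $i+j=n+1$, where $m_{i,j}=\min(\pi_{i-1,j},\pi_{i,j-1})$ if $i,j\neq 1$, $m_{i,j}=\pi_{i-1,j}$ if $j=1$, and $m_{i,j}=\pi_{i,j-1}$ if $i=1$. Then $f$ is a well-defined bijection $\mathrm{pstairPP}(n,M)\to\mathrm{QTCPP}(n,M)$, whose inverse is given by $f^{-1}(\pi')_{i,j}=2\pi'_{i,j}-M$ if $i+j<n+1$ and $f^{-1}(\pi')_{i,j}=\pi'_{i,j}-M+m'_{i,j}$ if $i+j=n+1$, where $m'_{i,j}$ is defined from $\pi'$ in the same way as $m_{i,j}$ from $\pi$.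
   Context: A staircase plane partition of size $n$ with upper bound $M$ is an array $\pi=(\pi_{i,j})$ of nonnegative integers indexed by cells $(i,j)$, $i,j\ge1$, $i+j\le n+1$, weakly decreasing along rows and columns, with $\pi_{1,1}\le M$; their set is $\mathrm{stairPP}(n,M)$. $\mathrm{pstairPP}(n,M)=\{\pi\in\mathrm{stairPP}(n,M)\mid \pi_{i,j}\equiv M \pmod 2 \text{ whenever } i+j<n+1\}$. $\mathrm{QTCPP}(n,M)$ is the set of $\pi\in\mathrm{stairPP}(n,M)$ such that (1) $\pi_{i,j}\ge M-\pi_{i-1,j}$ whenever $i+j=n+1$ and $2\le i\le n$, and (2) $\pi_{i,j}\ge M-\pi_{i,j-1}$ whenever $i+j=n+1$ and $2\le j\le n$. (This set is in natural bijection with quasi-transpose complementary plane partitions: $n\times n$ plane partitions with $\pi_{i,j}=M-\pi_{n+1-j,n+1-i}$ for $i+j\ne n+1$.) *)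

theory Defs
  imports Main
begin

text \<open>An array is a function nat \<Rightarrow> nat \<Rightarrow> int indexed by cells (i,j), i,j \<ge> 1.
  Staircase cells of size n: i \<ge> 1, j \<ge> 1, i + j \<le> n + 1.
  Arrays are required to vanish outside the staircase, so that each array
  corresponds to exactly one staircase plane partition.\<close>

definition cell :: "nat \<Rightarrow> nat \<Rightarrow> nat \<Rightarrow> bool" where
  "cell n i j \<longleftrightarrow> 1 \<le> i \<and> 1 \<le> j \<and> i + j \<le> n + 1"

definition stairPP :: "nat \<Rightarrow> int \<Rightarrow> (nat \<Rightarrow> nat \<Rightarrow> int) set" where
  "stairPP n M = {\<pi>.
     (\<forall>i j. \<not> cell n i j \<longrightarrow> \<pi> i j = 0) \<and>
     (\<forall>i j. cell n i j \<longrightarrow> 0 \<le> \<pi> i j) \<and>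
     (\<forall>i j. cell n i j \<and> cell n i (j+1) \<longrightarrow> \<pi> i (j+1) \<le> \<pi> i j) \<and>
     (\<forall>i j. cell n i j \<and> cell n (i+1) j \<longrightarrow> \<pi> (i+1) j \<le> \<pi> i j) \<and>
     \<pi> 1 1 \<le> M}"

definition pstairPP :: "nat \<Rightarrow> int \<Rightarrow> (nat \<Rightarrow> nat \<Rightarrow> int) set" where
  "pstairPP n M = {\<pi> \<in> stairPP n M.
     \<forall>i j. cell n i j \<and> i + j < n + 1 \<longrightarrow> \<pi> i j mod 2 = M mod 2}"

definition QTCPP :: "nat \<Rightarrow> int \<Rightarrow> (nat \<Rightarrow> nat \<Rightarrow> int) set" where
  "QTCPP n M = {\<pi> \<in> stairPP n M.
     (\<forall>i j. i + j = n + 1 \<and> 2 \<le> i \<and> i \<le> n \<and> 1 \<le> j \<longrightarrow> \<pi> i j \<ge> M - \<pi> (i-1) j) \<and>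
     (\<forall>i j. i + j = n + 1 \<and> 2 \<le> j \<and> j \<le> n \<and> 1 \<le> i \<longrightarrow> \<pi> i j \<ge> M - \<pi> i (j-1))}"

definition mval :: "(nat \<Rightarrow> nat \<Rightarrow> int) \<Rightarrow> nat \<Rightarrow> nat \<Rightarrow> int" where
  "mval \<pi> i j =
     (if i = 1 then \<pi> i (j-1)
      else if j = 1 then \<pi> (i-1) j
      else min (\<pi> (i-1) j) (\<pi> i (j-1)))"

definition fmap :: "nat \<Rightarrow> int \<Rightarrow> (nat \<Rightarrow> nat \<Rightarrow> int) \<Rightarrow> (nat \<Rightarrow> nat \<Rightarrow> int)" where
  "fmap n M \<pi> = (\<lambda>i j.
     if \<not> cell n i j then 0
     else if i + j < n + 1 then (\<pi> i j + M) div 2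
     else \<pi> i j + (M - mval \<pi> i j) div 2)"

definition finv :: "nat \<Rightarrow> int \<Rightarrow> (nat \<Rightarrow> nat \<Rightarrow> int) \<Rightarrow> (nat \<Rightarrow> nat \<Rightarrow> int)" where
  "finv n M \<pi>' = (\<lambda>i j.
     if \<not> cell n i j then 0
     else if i + j < n + 1 then 2 * \<pi>' i j - M
     else \<pi>' i j - M + mval \<pi>' i j)"

end

theory Submission
  imports Defs
begin

text \<open>On the interior cells of \<pi> \<in> pstairPP n M all entries are congruent to M modulo 2, and
  so is every m_{i,j}, which is an interior entry. Hence f is integral, and it is convenient to
  work with 2 f(\<pi>), which equals \<pi> + M inside and 2 \<pi> + M - m on the anti-diagonal: every
  condition to be checked becomes a linear inequality between entries of \<pi> and the values m.
  Since m is a minimum of interior entries and both f and its inverse are monotone affine maps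
  on the interior, m transforms like the interior entries. The constraint \<pi>_{i,j} \<le> m_{i,j} on the
  anti-diagonal then corresponds to monotonicity of f(\<pi>), and the complementarity conditions of
  QTCPP correspond to nonnegativity of the preimage.\<close>

lemma stairPPD:
  assumes "\<pi> \<in> stairPP n M"
  shows stairPP_outside: "\<not> cell n i j \<Longrightarrow> \<pi> i j = 0"
    and stairPP_nonneg: "cell n i j \<Longrightarrow> 0 \<le> \<pi> i j"
    and stairPP_row_step: "cell n i j \<Longrightarrow> cell n i (j+1) \<Longrightarrow> \<pi> i (j+1) \<le> \<pi> i j"
    and stairPP_col_step: "cell n i j \<Longrightarrow> cell n (i+1) j \<Longrightarrow> \<pi> (i+1) j \<le> \<pi> i j"
    and stairPP_corner: "\<pi> 1 1 \<le> M"
  using assms unfolding stairPP_def by blast+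

lemma stairPP_row_antimono:
  assumes P: "\<pi> \<in> stairPP n M" and "1 \<le> j" "j \<le> j'" "cell n i j'"
  shows "\<pi> i j' \<le> \<pi> i j"
  using assms(3,4)
proof (induction j' rule: dec_induct)
  case (step k)
  then have "cell n i k" using \<open>1 \<le> j\<close> by (auto simp: cell_def)
  with step stairPP_row_step[OF P] show ?case by fastforce
qed simp

lemma stairPP_col_antimono:
  assumes P: "\<pi> \<in> stairPP n M" and "1 \<le> i" "i \<le> i'" "cell n i' j"
  shows "\<pi> i' j \<le> \<pi> i j"
  using assms(3,4)
proof (induction i' rule: dec_induct)
  case (step k)
  then have "cell n k j" using \<open>1 \<le> i\<close> by (auto simp: cell_def)
  with step stairPP_col_step[OF P] show ?case by fastforce
qed simp

lemma stairPP_le_bound: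
  assumes P: "\<pi> \<in> stairPP n M" and c: "cell n i j"
  shows "\<pi> i j \<le> M"
proof -
  have "\<pi> i j \<le> \<pi> i 1" using stairPP_row_antimono[OF P _ _ c] c by (auto simp: cell_def)
  also have "\<dots> \<le> \<pi> 1 1" using stairPP_col_antimono[OF P] c by (auto simp: cell_def)
  also have "\<dots> \<le> M" using stairPP_corner[OF P] .
  finally show ?thesis .
qed

lemma pstairPP_interior_mod:
  "\<pi> \<in> pstairPP n M \<Longrightarrow> cell n i j \<Longrightarrow> i + j < n + 1 \<Longrightarrow> \<pi> i j mod 2 = M mod 2"
  unfolding pstairPP_def by blast

lemma QTCPPD:
  assumes "\<pi> \<in> QTCPP n M"
  shows QTCPP_stairPP: "\<pi> \<in> stairPP n M"
    and QTCPP_upper_compl: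
      "i + j = n + 1 \<Longrightarrow> 2 \<le> i \<Longrightarrow> i \<le> n \<Longrightarrow> 1 \<le> j \<Longrightarrow> M - \<pi> (i-1) j \<le> \<pi> i j"
    and QTCPP_left_compl:
      "i + j = n + 1 \<Longrightarrow> 2 \<le> j \<Longrightarrow> j \<le> n \<Longrightarrow> 1 \<le> i \<Longrightarrow> M - \<pi> i (j-1) \<le> \<pi> i j"
  using assms unfolding QTCPP_def by blast+

lemma cell_interior_or_boundary: "cell n i j \<Longrightarrow> i + j < n + 1 \<or> i + j = n + 1"
  by (auto simp: cell_def)

lemma mval_le_upper: "2 \<le> i \<Longrightarrow> mval \<pi> i j \<le> \<pi> (i-1) j"
  by (simp add: mval_def)

lemma mval_le_left: "2 \<le> j \<Longrightarrow> mval \<pi> i j \<le> \<pi> i (j-1)"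
  by (simp add: mval_def)

lemma mval_cases:
  assumes "1 \<le> i" "1 \<le> j" "3 \<le> i + j"
  obtains "2 \<le> i" "mval \<pi> i j = \<pi> (i-1) j" | "2 \<le> j" "mval \<pi> i j = \<pi> i (j-1)"
  using assms unfolding mval_def min_def
  by (cases "i = 1"; cases "j = 1"; cases "\<pi> (i-1) j \<le> \<pi> i (j-1)") auto

lemma mval_comp_mono:
  assumes "2 \<le> n" "cell n i j" "i + j = n + 1" "mono g"
    and \<sigma>: "\<And>a b. cell n a b \<Longrightarrow> a + b < n + 1 \<Longrightarrow> \<sigma> a b = g (\<pi> a b)"
  shows "mval \<sigma> i j = g (mval \<pi> i j)"
proof -
  have "cell n (i-1) j \<and> i - 1 + j < n + 1" if "2 \<le> i" using that assms(2,3) by (auto simp: cell_def)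
  moreover have "cell n i (j-1) \<and> i + (j - 1) < n + 1" if "2 \<le> j"
    using that assms(2,3) by (auto simp: cell_def)
  ultimately show ?thesis
    using assms(1-4) \<sigma> unfolding mval_def cell_def by (auto simp: min_of_mono)
qed

lemma stairPP_le_mval:
  assumes P: "\<pi> \<in> stairPP n M" and "2 \<le> n" "cell n i j" "i + j = n + 1"
  shows "\<pi> i j \<le> mval \<pi> i j"
proof -
  have "1 \<le> i" "1 \<le> j" "3 \<le> i + j" using assms(2-4) by (auto simp: cell_def)
  then show ?thesis
  proof (cases rule: mval_cases[where \<pi> = \<pi>])
    case 1
    then have "\<pi> (i - 1 + 1) j \<le> \<pi> (i-1) j"
      using assms(3,4) by (intro stairPP_col_step[OF P]) (auto simp: cell_def)
    with 1 show ?thesis by simp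
  next
    case 2
    then have "\<pi> i (j - 1 + 1) \<le> \<pi> i (j-1)"
      using assms(3,4) by (intro stairPP_row_step[OF P]) (auto simp: cell_def)
    with 2 show ?thesis by simp
  qed
qed

lemma mval_interior_neighbour:
  assumes "2 \<le> n" "cell n i j" "i + j = n + 1"
  obtains a b where "cell n a b" "a + b < n + 1" "mval \<pi> i j = \<pi> a b"
proof -
  have "1 \<le> i" "1 \<le> j" "3 \<le> i + j" using assms by (auto simp: cell_def)
  then show ?thesis
  proof (cases rule: mval_cases[where \<pi> = \<pi>])
    case 1
    then show ?thesis using that[of "i-1" j] assms(2,3) by (auto simp: cell_def)
  next
    case 2
    then show ?thesis using that[of i "j-1"] assms(2,3) by (auto simp: cell_def)
  qed
qed

lemma stairPP_mval_le_bound: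
  "\<pi> \<in> stairPP n M \<Longrightarrow> 2 \<le> n \<Longrightarrow> cell n i j \<Longrightarrow> i + j = n + 1 \<Longrightarrow> mval \<pi> i j \<le> M"
  by (metis mval_interior_neighbour stairPP_le_bound)

lemma pstairPP_even_interior:
  "\<pi> \<in> pstairPP n M \<Longrightarrow> cell n i j \<Longrightarrow> i + j < n + 1 \<Longrightarrow> even (\<pi> i j + M)"
  by (drule (2) pstairPP_interior_mod) presburger

lemma pstairPP_even_boundary:
  "\<pi> \<in> pstairPP n M \<Longrightarrow> 2 \<le> n \<Longrightarrow> cell n i j \<Longrightarrow> i + j = n + 1 \<Longrightarrow> even (M - mval \<pi> i j)"
  by (metis mval_interior_neighbour pstairPP_even_interior even_diff add.commute)

lemma QTCPP_boundary_compl: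
  assumes Q: "\<pi> \<in> QTCPP n M" and "2 \<le> n" "cell n i j" "i + j = n + 1"
  shows "M - mval \<pi> i j \<le> \<pi> i j"
proof -
  have "1 \<le> i" "1 \<le> j" "3 \<le> i + j" using assms(2-4) by (auto simp: cell_def)
  then show ?thesis
    by (cases rule: mval_cases[where \<pi> = \<pi>])
      (use assms(3,4) QTCPP_upper_compl[OF Q] QTCPP_left_compl[OF Q] in \<open>auto simp: cell_def\<close>)
qed

lemma QTCPP_interior_ge_half:
  assumes Q: "\<pi> \<in> QTCPP n M" and c: "cell n i j" and "i + j < n + 1"
  shows "M \<le> 2 * \<pi> i j"
proof -
  define k where "k = n + 1 - i"
  have k: "i + k = n + 1" "j < k" "cell n i k" "cell n i (k-1)"
    using c assms(3) unfolding k_def cell_def by auto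
  have "M - \<pi> i (k-1) \<le> \<pi> i k" using QTCPP_left_compl[OF Q k(1)] k c by (auto simp: cell_def)
  moreover have "\<pi> i k \<le> \<pi> i j" "\<pi> i (k-1) \<le> \<pi> i j"
    using stairPP_row_antimono[OF QTCPP_stairPP[OF Q]] k c by (auto simp: cell_def)
  ultimately show ?thesis by linarith
qed

lemma fmap_interior: "cell n i j \<Longrightarrow> i + j < n + 1 \<Longrightarrow> fmap n M \<pi> i j = (\<pi> i j + M) div 2"
  by (simp add: fmap_def)

lemma fmap_boundary:
  "cell n i j \<Longrightarrow> i + j = n + 1 \<Longrightarrow> fmap n M \<pi> i j = \<pi> i j + (M - mval \<pi> i j) div 2"
  by (simp add: fmap_def)

lemma finv_interior: "cell n i j \<Longrightarrow> i + j < n + 1 \<Longrightarrow> finv n M \<pi> i j = 2 * \<pi> i j - M"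
  by (simp add: finv_def)

lemma finv_boundary:
  "cell n i j \<Longrightarrow> i + j = n + 1 \<Longrightarrow> finv n M \<pi> i j = \<pi> i j - M + mval \<pi> i j"
  by (simp add: finv_def)

lemma fmap_interior_double:
  assumes "\<pi> \<in> pstairPP n M" "cell n i j" "i + j < n + 1"
  shows "2 * fmap n M \<pi> i j = \<pi> i j + M"
  using even_two_times_div_two[OF pstairPP_even_interior[OF assms]]
  by (simp add: fmap_interior[OF assms(2,3)])

lemma fmap_boundary_double:
  assumes "\<pi> \<in> pstairPP n M" "2 \<le> n" "cell n i j" "i + j = n + 1"
  shows "2 * fmap n M \<pi> i j = 2 * \<pi> i j + M - mval \<pi> i j"
  using even_two_times_div_two[OF pstairPP_even_boundary[OF assms]]
  by (simp add: fmap_boundary[OF assms(3,4)])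

lemma mval_fmap_double:
  assumes P: "\<pi> \<in> pstairPP n M" and "2 \<le> n" "cell n i j" "i + j = n + 1"
  shows "2 * mval (fmap n M \<pi>) i j = mval \<pi> i j + M"
proof -
  have "mval (fmap n M \<pi>) i j = (mval \<pi> i j + M) div 2"
    using assms(2-4) by (rule mval_comp_mono) (auto simp: mono_def zdiv_mono1 fmap_interior)
  moreover have "even (mval \<pi> i j + M)"
    using pstairPP_even_boundary[OF assms] by (simp add: add.commute)
  ultimately show ?thesis by simp
qed

lemma mval_finv:
  "2 \<le> n \<Longrightarrow> cell n i j \<Longrightarrow> i + j = n + 1 \<Longrightarrow> mval (finv n M \<pi>) i j = 2 * mval \<pi> i j - M"
  by (rule mval_comp_mono) (auto simp: mono_def finv_interior)

lemma fmap_in_QTCPP: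
  assumes n: "2 \<le> n" and M: "0 \<le> M" and P: "\<pi> \<in> pstairPP n M"
  shows "fmap n M \<pi> \<in> QTCPP n M"
proof -
  let ?\<sigma> = "fmap n M \<pi>"
  have S: "\<pi> \<in> stairPP n M" using P by (simp add: pstairPP_def)
  note inner = fmap_interior_double[OF P] and bdry = fmap_boundary_double[OF P n]
  have step: "?\<sigma> a' b' \<le> ?\<sigma> a b"
    if "cell n a b" "a + b < n + 1" "cell n a' b'" "\<pi> a' b' \<le> \<pi> a b"
      and "a' + b' = n + 1 \<Longrightarrow> mval \<pi> a' b' \<le> \<pi> a b" for a b a' b'
    using cell_interior_or_boundary[OF that(3)] inner[OF that(1,2)] inner[OF that(3)]
      bdry[OF that(3)] stairPP_le_mval[OF S n that(3)] that(4,5) by fastforce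
  show ?thesis
    unfolding QTCPP_def stairPP_def mem_Collect_eq
  proof (intro conjI allI impI)
    fix a b
    show "?\<sigma> a b = 0" if "\<not> cell n a b" using that by (simp add: fmap_def)
    show "0 \<le> ?\<sigma> a b" if c: "cell n a b"
      using cell_interior_or_boundary[OF c] inner[OF c] bdry[OF c] stairPP_nonneg[OF S c]
        stairPP_mval_le_bound[OF S n c] M by fastforce
    show "?\<sigma> a (b+1) \<le> ?\<sigma> a b" if "cell n a b \<and> cell n a (b+1)"
      using that stairPP_row_step[OF S] mval_le_left[of "b+1" \<pi> a]
      by (intro step) (auto simp: cell_def)
    show "?\<sigma> (a+1) b \<le> ?\<sigma> a b" if "cell n a b \<and> cell n (a+1) b"
      using that stairPP_col_step[OF S] mval_le_upper[of "a+1" \<pi> b]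
      by (intro step) (auto simp: cell_def)
    show "M - ?\<sigma> (a-1) b \<le> ?\<sigma> a b" if "a + b = n + 1 \<and> 2 \<le> a \<and> a \<le> n \<and> 1 \<le> b"
    proof -
      have "cell n a b" "cell n (a-1) b" "a - 1 + b < n + 1" using that by (auto simp: cell_def)
      then show ?thesis
        using that inner bdry mval_le_upper[of a \<pi> b] stairPP_nonneg[OF S] by fastforce
    qed
    show "M - ?\<sigma> a (b-1) \<le> ?\<sigma> a b" if "a + b = n + 1 \<and> 2 \<le> b \<and> b \<le> n \<and> 1 \<le> a"
    proof -
      have "cell n a b" "cell n a (b-1)" "a + (b - 1) < n + 1" using that by (auto simp: cell_def)
      then show ?thesis
        using that inner bdry mval_le_left[of b \<pi> a] stairPP_nonneg[OF S] by fastforce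
    qed
  next
    have "cell n 1 1" "1 + 1 < n + 1" using n by (auto simp: cell_def)
    then show "?\<sigma> 1 1 \<le> M" using inner stairPP_corner[OF S] by fastforce
  qed
qed

lemma finv_in_pstairPP:
  assumes n: "2 \<le> n" and Q: "\<pi> \<in> QTCPP n M"
  shows "finv n M \<pi> \<in> pstairPP n M"
proof -
  let ?\<tau> = "finv n M \<pi>"
  have S: "\<pi> \<in> stairPP n M" using QTCPP_stairPP[OF Q] .
  have step: "?\<tau> a' b' \<le> ?\<tau> a b"
    if "cell n a b" "a + b < n + 1" "cell n a' b'" "\<pi> a' b' \<le> \<pi> a b"
      and "a' + b' = n + 1 \<Longrightarrow> mval \<pi> a' b' \<le> \<pi> a b" for a b a' b'
    using cell_interior_or_boundary[OF that(3)] finv_interior[OF that(1,2)]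
      finv_interior[OF that(3)] finv_boundary[OF that(3)] that(4,5) by fastforce
  show ?thesis
    unfolding pstairPP_def stairPP_def mem_Collect_eq
  proof (intro conjI allI impI)
    fix a b
    show "?\<tau> a b = 0" if "\<not> cell n a b" using that by (simp add: finv_def)
    show "0 \<le> ?\<tau> a b" if c: "cell n a b"
      using cell_interior_or_boundary[OF c] finv_interior[OF c] finv_boundary[OF c]
        QTCPP_interior_ge_half[OF Q c] QTCPP_boundary_compl[OF Q n c] by fastforce
    show "?\<tau> a (b+1) \<le> ?\<tau> a b" if "cell n a b \<and> cell n a (b+1)"
      using that stairPP_row_step[OF S] mval_le_left[of "b+1" \<pi> a]
      by (intro step) (auto simp: cell_def)
    show "?\<tau> (a+1) b \<le> ?\<tau> a b" if "cell n a b \<and> cell n (a+1) b"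
      using that stairPP_col_step[OF S] mval_le_upper[of "a+1" \<pi> b]
      by (intro step) (auto simp: cell_def)
    show "?\<tau> a b mod 2 = M mod 2" if "cell n a b \<and> a + b < n + 1"
      using that finv_interior[of n a b M \<pi>] by simp presburger
  next
    have "cell n 1 1" "1 + 1 < n + 1" using n by (auto simp: cell_def)
    then show "?\<tau> 1 1 \<le> M" using finv_interior stairPP_corner[OF S] by fastforce
  qed
qed

lemma finv_fmap:
  assumes n: "2 \<le> n" and P: "\<pi> \<in> pstairPP n M"
  shows "finv n M (fmap n M \<pi>) = \<pi>"
proof (intro ext)
  fix i j
  have S: "\<pi> \<in> stairPP n M" using P by (simp add: pstairPP_def)
  show "finv n M (fmap n M \<pi>) i j = \<pi> i j"
  proof (cases "cell n i j")
    case False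
    then show ?thesis using stairPP_outside[OF S] by (simp add: finv_def)
  next
    case c: True
    then show ?thesis
      using cell_interior_or_boundary[OF c] finv_interior[OF c] finv_boundary[OF c]
        fmap_interior_double[OF P c] fmap_boundary_double[OF P n c] mval_fmap_double[OF P n c]
      by fastforce
  qed
qed

lemma fmap_finv:
  assumes n: "2 \<le> n" and Q: "\<pi> \<in> QTCPP n M"
  shows "fmap n M (finv n M \<pi>) = \<pi>"
proof (intro ext)
  fix i j
  show "fmap n M (finv n M \<pi>) i j = \<pi> i j"
  proof (cases "cell n i j")
    case False
    then show ?thesis using stairPP_outside[OF QTCPP_stairPP[OF Q]] by (simp add: fmap_def)
  next
    case c: True
    have "M - (2 * mval \<pi> i j - M) = 2 * (M - mval \<pi> i j)" by simp
    then show ?thesis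
      using cell_interior_or_boundary[OF c] fmap_interior[OF c] fmap_boundary[OF c]
        finv_interior[OF c] finv_boundary[OF c] mval_finv[OF n c] by fastforce
  qed
qed

lemma pstairPP_eq_QTCPP_1: "pstairPP 1 M = QTCPP 1 M"
  unfolding pstairPP_def QTCPP_def by (auto simp: cell_def)

theorem mainTheorem2:
  fixes n :: nat and M :: int
  assumes "0 < n" and "0 \<le> M"
  shows "(n = 1 \<longrightarrow> pstairPP n M = QTCPP n M) \<and>
         (2 \<le> n \<longrightarrow>
            (\<forall>\<pi>\<in>pstairPP n M. \<forall>i j. cell n i j \<longrightarrow>
                 (if i + j < n + 1 then even (\<pi> i j + M) else even (M - mval \<pi> i j))) \<and>
            bij_betw (fmap n M) (pstairPP n M) (QTCPP n M) \<and>
            (\<forall>\<pi>\<in>pstairPP n M. finv n M (fmap n M \<pi>) = \<pi>) \<and>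
            (\<forall>\<pi>'\<in>QTCPP n M. finv n M \<pi>' \<in> pstairPP n M \<and> fmap n M (finv n M \<pi>') = \<pi>'))"
proof (intro conjI impI)
  assume n: "2 \<le> n"
  show "\<forall>\<pi>\<in>pstairPP n M. \<forall>i j. cell n i j \<longrightarrow>
          (if i + j < n + 1 then even (\<pi> i j + M) else even (M - mval \<pi> i j))"
    using pstairPP_even_interior pstairPP_even_boundary[OF _ n] cell_interior_or_boundary by fastforce
  show "bij_betw (fmap n M) (pstairPP n M) (QTCPP n M)"
    by (rule bij_betw_byWitness[where f' = "finv n M"])
      (use finv_fmap[OF n] fmap_finv[OF n] fmap_in_QTCPP[OF n assms(2)] finv_in_pstairPP[OF n] in auto)
  show "\<forall>\<pi>\<in>pstairPP n M. finv n M (fmap n M \<pi>) = \<pi>" using finv_fmap[OF n] by blast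
  show "\<forall>\<pi>'\<in>QTCPP n M. finv n M \<pi>' \<in> pstairPP n M \<and> fmap n M (finv n M \<pi>') = \<pi>'"
    using finv_in_pstairPP[OF n] fmap_finv[OF n] by blast
qed (use pstairPP_eq_QTCPP_1 in auto)

end
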